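(* If $M$ is an arbitrarily divisible group, then the only recognizable subsets of $M$ are $\emptyset$ and $M$, i.e. $\mathrm{Rec}(M) = \{\emptyset, M\}$.
   Context: A monoid $M$ is arbitrarily divisible if for every $m \in M$ and every positive integer $k$ there exists $m_k \in M$ with $(m_k)^k = m$. A subset $S$ of a monoid $M$ is recognizable if there exist a finite monoid $N$, a monoid morphism $\varphi\colon M \to N$ and a subset $T \subseteq N$ with $S = \varphi^{-1}(T)$. $\mathrm{Rec}(M)$ denotes the set of recognizable subsets of $M$. *)

theory Defs
  imports "HOL-Algebra.Group"
begin

definition arbitrarily_divisible :: "('a, 'c) monoid_scheme \<Rightarrow> bool" where
  "arbitrarily_divisible M \<longleftrightarrow>
     (\<forall>m \<in> carrier M. \<forall>k::nat. k > 0 \<longrightarrow> (\<exists>mk \<in> carrier M. mk [^]\<^bsub>M\<^esub> k = m))"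

text \<open>Recognizable subsets. Every finite monoid is isomorphic to one whose
  carrier is a finite set of natural numbers, so quantifying over finite
  monoids with carrier in nat loses no generality.\<close>
definition recognizable :: "('a, 'c) monoid_scheme \<Rightarrow> 'a set \<Rightarrow> bool" where
  "recognizable M S \<longleftrightarrow>
     (\<exists>(N :: nat monoid) \<phi> T. monoid N \<and> finite (carrier N) \<and>
        \<phi> \<in> hom M N \<and> T \<subseteq> carrier N \<and>
        S = {x \<in> carrier M. \<phi> x \<in> T})"

definition Rec :: "('a, 'c) monoid_scheme \<Rightarrow> 'a set set" where
  "Rec M = {S. S \<subseteq> carrier M \<and> recognizable M S}"

end

theory Submission
  imports Defs
begin

text \<open>A morphism \<open>\<phi>\<close> from a group into a finite monoid \<open>N\<close> with \<open>n\<close> elements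
  sends every \<open>n!\<close>-th power to \<open>\<phi> \<one>\<close>: by pigeonhole two of \<open>\<phi> (a [^] 1), \<dots>, \<phi> (a [^] (n+1))\<close>
  coincide, so \<open>\<phi> (a [^] p) = \<phi> \<one>\<close> for some \<open>1 \<le> p \<le> n\<close>, and \<open>p\<close> divides \<open>n!\<close>.
  In an arbitrarily divisible group every element is an \<open>n!\<close>-th power, so \<open>\<phi>\<close> is
  constant and every preimage \<open>\<phi>\<inverse> T\<close> is empty or everything.\<close>

lemma hom_pow_eq_hom_one:
  fixes M (structure)
  assumes "monoid M" and \<phi>: "\<phi> \<in> hom M N" and c: "c \<in> carrier M"
    and c_ker: "\<phi> c = \<phi> \<one>"
  shows "\<phi> (c [^] (q::nat)) = \<phi> \<one>"
proof (induction q)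
  case 0
  show ?case by simp
next
  case (Suc q)
  interpret monoid M by fact
  have "\<phi> (c [^] Suc q) = \<phi> (c [^] q) \<otimes>\<^bsub>N\<^esub> \<phi> c"
    using \<phi> c by (simp add: hom_mult)
  also have "\<dots> = \<phi> (\<one> \<otimes> \<one>)"
    using Suc c_ker hom_mult[OF \<phi> one_closed one_closed] by simp
  finally show ?case by simp
qed

lemma hom_mult_inv_eq_hom_one:
  fixes M (structure)
  assumes "group M" and \<phi>: "\<phi> \<in> hom M N" and x: "x \<in> carrier M" and y: "y \<in> carrier M"
    and "\<phi> x = \<phi> y"
  shows "\<phi> (x \<otimes> inv y) = \<phi> \<one>"
proof -
  interpret group M by fact
  have "\<phi> (x \<otimes> inv y) = \<phi> y \<otimes>\<^bsub>N\<^esub> \<phi> (inv y)"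
    using \<phi> x y \<open>\<phi> x = \<phi> y\<close> by (simp add: hom_mult)
  also have "\<dots> = \<phi> (y \<otimes> inv y)"
    using hom_mult[OF \<phi> y inv_closed[OF y]] by simp
  finally show ?thesis using y by simp
qed

lemma hom_pow_period:
  fixes M (structure)
  assumes "group M" and \<phi>: "\<phi> \<in> hom M N" and fin: "finite (carrier N)"
    and a: "a \<in> carrier M"
  obtains p where "1 \<le> p" "p \<le> card (carrier N)" "\<phi> (a [^] p) = \<phi> \<one>"
proof -
  interpret group M by fact
  let ?n = "card (carrier N)"
  let ?f = "\<lambda>i::nat. \<phi> (a [^] i)"
  have f_range: "?f ` {1..?n+1} \<subseteq> carrier N"
    using \<phi> a by (auto simp: hom_def)
  have "\<not> inj_on ?f {1..?n+1}"
  proof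
    assume "inj_on ?f {1..?n+1}"
    then have "card (?f ` {1..?n+1}) = ?n + 1"
      by (simp add: card_image)
    with card_mono[OF fin f_range] show False by simp
  qed
  then obtain i j where "i \<in> {1..?n+1}" "j \<in> {1..?n+1}" "i \<noteq> j" "?f i = ?f j"
    unfolding inj_on_def by blast
  then obtain i j where ij: "i \<in> {1..?n+1}" "j \<in> {1..?n+1}" "i < j" "?f j = ?f i"
    by (metis linorder_neqE_nat)
  have "a [^] j = a [^] (j - i) \<otimes> a [^] i"
    using a \<open>i < j\<close> by (simp add: nat_pow_mult)
  then have "a [^] (j - i) = a [^] j \<otimes> inv (a [^] i)"
    using a by (simp add: m_assoc)
  then have "\<phi> (a [^] (j - i)) = \<phi> \<one>"
    using hom_mult_inv_eq_hom_one[OF \<open>group M\<close> \<phi>] a ij(4) by simp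
  moreover have "1 \<le> j - i" "j - i \<le> ?n"
    using ij by auto
  ultimately show ?thesis
    using that by blast
qed

lemma hom_pow_fact_card:
  fixes M (structure)
  assumes "group M" and \<phi>: "\<phi> \<in> hom M N" and fin: "finite (carrier N)"
    and a: "a \<in> carrier M"
  shows "\<phi> (a [^] (fact (card (carrier N)) :: nat)) = \<phi> \<one>"
proof -
  interpret group M by fact
  obtain p where p: "1 \<le> p" "p \<le> card (carrier N)" "\<phi> (a [^] p) = \<phi> \<one>"
    using hom_pow_period[OF \<open>group M\<close> \<phi> fin a] .
  then have "p dvd fact (card (carrier N))"
    by (simp add: dvd_fact)
  then obtain q where "(fact (card (carrier N)) :: nat) = p * q"
    by (rule dvdE)
  then have "a [^] (fact (card (carrier N)) :: nat) = (a [^] p) [^] q"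
    using a by (simp add: nat_pow_pow)
  then show ?thesis
    using hom_pow_eq_hom_one[OF monoid_axioms \<phi> nat_pow_closed[OF a] p(3)] by simp
qed

lemma arbitrarily_divisible_hom_finite_const:
  fixes M (structure)
  assumes "group M" and "arbitrarily_divisible M"
    and \<phi>: "\<phi> \<in> hom M N" and fin: "finite (carrier N)" and x: "x \<in> carrier M"
  shows "\<phi> x = \<phi> \<one>"
proof -
  have "(fact (card (carrier N)) :: nat) > 0"
    by simp
  then obtain b where "b \<in> carrier M" "b [^] (fact (card (carrier N)) :: nat) = x"
    using \<open>arbitrarily_divisible M\<close> x unfolding arbitrarily_divisible_def by blast
  then show ?thesis
    using hom_pow_fact_card[OF \<open>group M\<close> \<phi> fin] by blast
qed

lemma recognizable_arbitrarily_divisible_group: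
  assumes "group M" and "arbitrarily_divisible M" and "recognizable M S"
  shows "S = {} \<or> S = carrier M"
proof -
  obtain N :: "nat monoid" and \<phi> T where fin: "finite (carrier N)" and \<phi>: "\<phi> \<in> hom M N"
    and S: "S = {x \<in> carrier M. \<phi> x \<in> T}"
    using \<open>recognizable M S\<close> unfolding recognizable_def by blast
  have "\<phi> x = \<phi> \<one>\<^bsub>M\<^esub>" if "x \<in> carrier M" for x
    using arbitrarily_divisible_hom_finite_const[OF assms(1,2) \<phi> fin that] .
  then show ?thesis
    unfolding S by (cases "\<phi> \<one>\<^bsub>M\<^esub> \<in> T") auto
qed

definition trivial_monoid :: "nat monoid" where
  "trivial_monoid = \<lparr>carrier = {0}, mult = (\<lambda>_ _. 0), one = 0\<rparr>"

lemma recognizable_preimage_trivial_monoid: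
  assumes "T \<subseteq> {0}"
  shows "recognizable M {x \<in> carrier M. (0::nat) \<in> T}"
  unfolding recognizable_def
proof (intro exI conjI)
  show "monoid trivial_monoid"
    unfolding trivial_monoid_def by (rule monoidI) auto
  show "(\<lambda>_. 0) \<in> hom M trivial_monoid"
    unfolding trivial_monoid_def hom_def by auto
qed (use assms in \<open>auto simp: trivial_monoid_def\<close>)

theorem proposition3:
  fixes M :: "('a, 'c) monoid_scheme"
  assumes "group M" and "arbitrarily_divisible M"
  shows "Rec M = {{}, carrier M}"
proof -
  have "recognizable M {}" "recognizable M (carrier M)"
    using recognizable_preimage_trivial_monoid[of "{}" M]
      recognizable_preimage_trivial_monoid[of "{0}" M] by simp_all
  then show ?thesis
    using recognizable_arbitrarily_divisible_group[OF assms]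
    unfolding Rec_def by auto
qed

end
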